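(* $\mathsf{DFD}^{\neq\emptyset}$ has the finite model property with respect to its general relational models: for every formula $\varphi\in\mathcal{L}^{\neq\emptyset}$, if $\varphi$ is satisfied at some state of some general relational model of $\mathsf{DFD}^{\neq\emptyset}$, then $\varphi$ is satisfied at some state of a finite general relational model of $\mathsf{DFD}^{\neq\emptyset}$.
   Context: Vocabulary: finite set $V$ of basic variables and predicate symbols with arities. Terms: $v\in V$, and $\bigcirc x$ for a term $x$. Formulas of $\mathcal{L}^{\neq\emptyset}$: $P(x_1,\dots,x_k)$, $\neg\varphi$, $\varphi\wedge\psi$, $\bigcirc\varphi$, $\mathsf{D}_X\varphi$, $D_Xy$ where $X$ ranges over finite non-empty sets of terms. $\bigcirc X=\{\bigcirc x:x\in X\}$. A general relational model of $\mathsf{DFD}^{\neq\emptyset}$ is $(W,g,=_X,\|\cdot\|)_X$: $W$ non-empty; $g:W\to W$; for each finite non-empty set $X$ of terms a binary relation $=_X$ on $W$; $\|\cdot\|$ maps atoms $P(x_1,\dots,x_n)$ and $D_Xy$ ($X$ non-empty) to subsets of $W$ (write $s\vDash\alpha$ for $s\in\|\alpha\|$, and $s\vDash D_XY$ iff $s\vDash D_Xy$ for all $y\in Y$). For all non-empty finite $X,Y,Z$: (C2) $=_X$ is an equivalence relation; (C3) $s\vDash D_Xx$ for $x\in X$; $s\vDash D_XY$ and $s\vDash D_YZ$ imply $s\vDash D_XZ$; $s\vDash D_V\bigcirc x$ for all terms $x$; (C4) $s=_Xw$ and $s\vDash D_XY$ imply $w\vDash D_XY$ and $s=_Yw$; (C5)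 $s=_Xw$, $s\vDash P(x_1,\dots,x_n)$ with $x_i\in X$ imply $w\vDash P(x_1,\dots,x_n)$; (C6) $s\vDash P(\bigcirc x_1,\dots,\bigcirc x_n)$ iff $g(s)\vDash P(x_1,\dots,x_n)$; (C7) $s=_{\bigcirc X}w$ implies $g(s)=_Xg(w)$; (C8) $g(s)\vDash D_XY$ implies $s\vDash D_{\bigcirc X}\bigcirc Y$. Truth: atoms via $\|\cdot\|$; Boolean as usual; $s\vDash\bigcirc\varphi$ iff $g(s)\vDash\varphi$; $s\vDash\mathsf{D}_X\varphi$ iff every $t$ with $s=_Xt$ satisfies $\varphi$. The model is finite if $W$ is finite. *)

theory Defs
  imports Main
begin

datatype 'v trm = Var 'v | Nx "'v trm"

datatype ('v, 'p) fm =
    Pred 'p "'v trm list"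
  | Neg "('v, 'p) fm"
  | Conj "('v, 'p) fm" "('v, 'p) fm"
  | Next "('v, 'p) fm"
  | DMod "'v trm set" "('v, 'p) fm"
  | Dep "'v trm set" "'v trm"

definition fne :: "'a set \<Rightarrow> bool" where
  "fne X \<longleftrightarrow> finite X \<and> X \<noteq> {}"

fun wf_fm :: "('p \<Rightarrow> nat) \<Rightarrow> ('v, 'p) fm \<Rightarrow> bool" where
  "wf_fm ar (Pred P xs) = (length xs = ar P)"
| "wf_fm ar (Neg \<phi>) = wf_fm ar \<phi>"
| "wf_fm ar (Conj \<phi> \<psi>) = (wf_fm ar \<phi> \<and> wf_fm ar \<psi>)"
| "wf_fm ar (Next \<phi>) = wf_fm ar \<phi>"
| "wf_fm ar (DMod X \<phi>) = (fne X \<and> wf_fm ar \<phi>)"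
| "wf_fm ar (Dep X y) = fne X"

definition depS :: "('v trm set \<Rightarrow> 'v trm \<Rightarrow> 'w set) \<Rightarrow> 'w \<Rightarrow> 'v trm set \<Rightarrow> 'v trm set \<Rightarrow> bool" where
  "depS VD s X Y \<longleftrightarrow> (\<forall>y\<in>Y. s \<in> VD X y)"

text \<open>General relational model (W, g, =_X, ||.||) of DFD^{not empty};
  E X is the relation =_X, VP and VD the valuation of the atoms P(xs) and D_X y.\<close>
definition gen_model ::
  "('p \<Rightarrow> nat) \<Rightarrow> 'w set \<Rightarrow> ('w \<Rightarrow> 'w) \<Rightarrow> ('v trm set \<Rightarrow> ('w \<times> 'w) set)
   \<Rightarrow> ('p \<Rightarrow> 'v trm list \<Rightarrow> 'w set) \<Rightarrow> ('v trm set \<Rightarrow> 'v trm \<Rightarrow> 'w set) \<Rightarrow> bool" where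
  "gen_model ar W g E VP VD \<longleftrightarrow>
     W \<noteq> {} \<and> (\<forall>s\<in>W. g s \<in> W)
   \<and> (\<forall>P xs. length xs = ar P \<longrightarrow> VP P xs \<subseteq> W)
   \<and> (\<forall>X y. fne X \<longrightarrow> VD X y \<subseteq> W)
   \<comment> \<open>C2\<close>
   \<and> (\<forall>X. fne X \<longrightarrow> equiv W (E X))
   \<comment> \<open>C3\<close>
   \<and> (\<forall>X s x. fne X \<longrightarrow> s \<in> W \<longrightarrow> x \<in> X \<longrightarrow> s \<in> VD X x)
   \<and> (\<forall>X Y Z s. fne X \<longrightarrow> fne Y \<longrightarrow> fne Z \<longrightarrow> s \<in> W \<longrightarrow>
         depS VD s X Y \<longrightarrow> depS VD s Y Z \<longrightarrow> depS VD s X Z)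
   \<and> (\<forall>s x. s \<in> W \<longrightarrow> s \<in> VD (range Var) (Nx x))
   \<comment> \<open>C4\<close>
   \<and> (\<forall>X Y s w. fne X \<longrightarrow> fne Y \<longrightarrow> s \<in> W \<longrightarrow> w \<in> W \<longrightarrow> (s, w) \<in> E X \<longrightarrow>
         depS VD s X Y \<longrightarrow> depS VD w X Y \<and> (s, w) \<in> E Y)
   \<comment> \<open>C5\<close>
   \<and> (\<forall>X s w P xs. fne X \<longrightarrow> s \<in> W \<longrightarrow> w \<in> W \<longrightarrow> length xs = ar P \<longrightarrow>
         (s, w) \<in> E X \<longrightarrow> s \<in> VP P xs \<longrightarrow> set xs \<subseteq> X \<longrightarrow> w \<in> VP P xs)
   \<comment> \<open>C6\<close>
   \<and> (\<forall>s P xs. s \<in> W \<longrightarrow> length xs = ar P \<longrightarrow>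
         (s \<in> VP P (map Nx xs) \<longleftrightarrow> g s \<in> VP P xs))
   \<comment> \<open>C7\<close>
   \<and> (\<forall>X s w. fne X \<longrightarrow> s \<in> W \<longrightarrow> w \<in> W \<longrightarrow>
         (s, w) \<in> E (Nx ` X) \<longrightarrow> (g s, g w) \<in> E X)
   \<comment> \<open>C8\<close>
   \<and> (\<forall>X Y s. fne X \<longrightarrow> fne Y \<longrightarrow> s \<in> W \<longrightarrow>
         depS VD (g s) X Y \<longrightarrow> depS VD s (Nx ` X) (Nx ` Y))"

fun sat :: "'w set \<Rightarrow> ('w \<Rightarrow> 'w) \<Rightarrow> ('v trm set \<Rightarrow> ('w \<times> 'w) set)
   \<Rightarrow> ('p \<Rightarrow> 'v trm list \<Rightarrow> 'w set) \<Rightarrow> ('v trm set \<Rightarrow> 'v trm \<Rightarrow> 'w set) \<Rightarrow> 'w \<Rightarrow> ('v, 'p) fm \<Rightarrow> bool" where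
  "sat W g E VP VD s (Pred P xs) = (s \<in> VP P xs)"
| "sat W g E VP VD s (Neg \<phi>) = (\<not> sat W g E VP VD s \<phi>)"
| "sat W g E VP VD s (Conj \<phi> \<psi>) = (sat W g E VP VD s \<phi> \<and> sat W g E VP VD s \<psi>)"
| "sat W g E VP VD s (Next \<phi>) = sat W g E VP VD (g s) \<phi>"
| "sat W g E VP VD s (DMod X \<phi>) = (\<forall>t\<in>W. (s, t) \<in> E X \<longrightarrow> sat W g E VP VD t \<phi>)"
| "sat W g E VP VD s (Dep X y) = (s \<in> VD X y)"

end

theory Submission
  imports Defs
begin

text \<open>The proof is a filtration. Fix N bounding the nesting of \<open>\<bigcirc>\<close> in \<open>\<phi>\<close>, and let \<open>Cl k\<close> be
  the finite set consisting of the atoms over terms of depth at most k, the subformulas of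
  \<open>\<phi>\<close>, and \<open>\<bigcirc>\<chi>\<close> for \<open>\<chi> \<in> Cl (k - 1)\<close>. The states of the finite model are the pairs
  \<open>(k, tp k w)\<close> with \<open>k \<le> N\<close>, where \<open>tp k w\<close> is the set of formulas of \<open>Cl k\<close> true at w.
  The successor lowers the level by one and is the identity at level 0; accordingly a state
  of level k reads a term through \<open>trunc k\<close>, which keeps at most k leading \<open>\<bigcirc>\<close>.

  Since C4 requires \<open>=\<^sub>X\<close> to refine \<open>=\<^sub>Y\<close> wherever \<open>D\<^sub>X Y\<close> holds, the relation
  \<open>=\<^sub>X\<close> of the finite model is defined through the dependences recorded in the states:
  two states of level k are \<open>=\<^sub>X\<close>-related when they agree on the formulas of their type
  that are invariant under \<open>=\<^sub>D\<close>, where D is the set of terms which, according to the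
  state itself, X determines. The
  dependence atoms \<open>D\<^sub>X y\<close> are among these formulas, so related states determine the same D:
  the relation is the kernel of a function (\<open>key\<close>), hence an equivalence. Since \<open>=\<^sub>D\<close>
  refines \<open>=\<^sub>Z\<close> for \<open>Z \<subseteq> D\<close>, the remaining conditions are inherited from the given model,
  and a truth lemma shows that \<open>(N, tp N s)\<close> satisfies \<open>\<phi>\<close>. Finally the finite model is
  transported along a bijection to an initial segment of the naturals.\<close>

lemma equiv_pullback:
  assumes "equiv B r" and "f ` A \<subseteq> B"
  shows "equiv A {(a, b) \<in> A \<times> A. (f a, f b) \<in> r}"
proof (rule equivI)
  show "refl_on A {(a, b) \<in> A \<times> A. (f a, f b) \<in> r}"
    using assms by (intro refl_onI) (auto elim!: equivE dest: refl_onD)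
  show "sym {(a, b) \<in> A \<times> A. (f a, f b) \<in> r}"
    using assms(1) by (intro symI) (auto elim!: equivE dest: symD)
  show "trans {(a, b) \<in> A \<times> A. (f a, f b) \<in> r}"
    using assms(1) by (intro transI) (auto elim!: equivE dest: transD)
qed auto

lemma equiv_kernel_on: "equiv A {(a, b) \<in> A \<times> A. h a = h b}"
  by (intro equivI refl_onI symI transI) auto

locale dfd_model =
  fixes ar :: "'p \<Rightarrow> nat" and W :: "'w set" and g :: "'w \<Rightarrow> 'w"
    and E :: "'v trm set \<Rightarrow> ('w \<times> 'w) set"
    and VP :: "'p \<Rightarrow> 'v trm list \<Rightarrow> 'w set" and VD :: "'v trm set \<Rightarrow> 'v trm \<Rightarrow> 'w set"
  assumes model: "gen_model ar W g E VP VD"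
begin

abbreviation S :: "'w \<Rightarrow> ('v, 'p) fm \<Rightarrow> bool" where
  "S \<equiv> sat W g E VP VD"

lemma model_conditions:
  shows "W \<noteq> {}" "\<forall>s\<in>W. g s \<in> W"
    "\<forall>X. fne X \<longrightarrow> equiv W (E X)"
    "\<forall>X s x. fne X \<longrightarrow> s \<in> W \<longrightarrow> x \<in> X \<longrightarrow> s \<in> VD X x"
    "\<forall>X Y Z s. fne X \<longrightarrow> fne Y \<longrightarrow> fne Z \<longrightarrow> s \<in> W \<longrightarrow>
       depS VD s X Y \<longrightarrow> depS VD s Y Z \<longrightarrow> depS VD s X Z"
    "\<forall>s x. s \<in> W \<longrightarrow> s \<in> VD (range Var) (Nx x)"
    "\<forall>X Y s w. fne X \<longrightarrow> fne Y \<longrightarrow> s \<in> W \<longrightarrow> w \<in> W \<longrightarrow> (s, w) \<in> E X \<longrightarrow>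
       depS VD s X Y \<longrightarrow> depS VD w X Y \<and> (s, w) \<in> E Y"
    "\<forall>X s w P xs. fne X \<longrightarrow> s \<in> W \<longrightarrow> w \<in> W \<longrightarrow> length xs = ar P \<longrightarrow>
       (s, w) \<in> E X \<longrightarrow> s \<in> VP P xs \<longrightarrow> set xs \<subseteq> X \<longrightarrow> w \<in> VP P xs"
    "\<forall>s P xs. s \<in> W \<longrightarrow> length xs = ar P \<longrightarrow> (s \<in> VP P (map Nx xs) \<longleftrightarrow> g s \<in> VP P xs)"
    "\<forall>X s w. fne X \<longrightarrow> s \<in> W \<longrightarrow> w \<in> W \<longrightarrow> (s, w) \<in> E (Nx ` X) \<longrightarrow> (g s, g w) \<in> E X"
    "\<forall>X Y s. fne X \<longrightarrow> fne Y \<longrightarrow> s \<in> W \<longrightarrow>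
       depS VD (g s) X Y \<longrightarrow> depS VD s (Nx ` X) (Nx ` Y)"
  by (insert model, unfold gen_model_def, elim conjE, assumption)+

lemmas W_nonempty = model_conditions(1)
  and g_closed = model_conditions(2)[rule_format]
  and E_equiv = model_conditions(3)[rule_format]
  and Dep_refl = model_conditions(4)[rule_format]
  and Dep_trans = model_conditions(5)[rule_format]
  and Dep_Var_Nx = model_conditions(6)[rule_format]
  and E_Dep = model_conditions(7)[rule_format]
  and E_Pred = model_conditions(8)[rule_format]
  and Pred_Nx = model_conditions(9)[rule_format]
  and E_Nx = model_conditions(10)[rule_format]
  and Dep_Nx = model_conditions(11)[rule_format]

lemma E_refl: "fne X \<Longrightarrow> s \<in> W \<Longrightarrow> (s, s) \<in> E X"
  using E_equiv by (meson equiv_def refl_onD)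

lemma E_sym: "fne X \<Longrightarrow> (s, w) \<in> E X \<Longrightarrow> (w, s) \<in> E X"
  using E_equiv by (meson equiv_def symD)

lemma E_trans: "fne X \<Longrightarrow> (s, w) \<in> E X \<Longrightarrow> (w, t) \<in> E X \<Longrightarrow> (s, t) \<in> E X"
  using E_equiv by (meson equiv_def transD)

lemma bij_pullback_model:
  assumes bij: "bij_betw f A W"
  defines "g' \<equiv> \<lambda>a. inv_into A f (g (f a))"
    and "E' \<equiv> \<lambda>X. {(a, b) \<in> A \<times> A. (f a, f b) \<in> E X}"
    and "VP' \<equiv> \<lambda>P xs. {a \<in> A. f a \<in> VP P xs}"
    and "VD' \<equiv> \<lambda>X y. {a \<in> A. f a \<in> VD X y}"
  shows "gen_model ar A g' E' VP' VD'"
    and "a \<in> A \<Longrightarrow> sat A g' E' VP' VD' a \<phi> \<longleftrightarrow> S (f a) \<phi>"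
proof -
  have f_in: "f a \<in> W" if "a \<in> A" for a
    using bij that by (meson bij_betwE)
  have g': "g' a \<in> A \<and> f (g' a) = g (f a)" if "a \<in> A" for a
    using bij g_closed[OF f_in[OF that]] unfolding g'_def
    by (simp add: bij_betw_inv_into_right inv_into_into bij_betw_imp_surj_on)
  have VD': "a \<in> VD' X y \<longleftrightarrow> a \<in> A \<and> f a \<in> VD X y" for a X y
    unfolding VD'_def by blast
  have depS': "depS VD' a X Y \<longleftrightarrow> depS VD (f a) X Y" if "a \<in> A" for a X Y
    using that unfolding depS_def VD'_def by auto
  have ball_W: "(\<forall>s\<in>W. P s) \<longleftrightarrow> (\<forall>a\<in>A. P (f a))" for P
    using bij by (metis bij_betw_imp_surj_on imageE imageI)
  have "equiv A (E' X)" if "fne X" for X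
    unfolding E'_def by (rule equiv_pullback[OF E_equiv[OF that]]) (use f_in in blast)
  then show "gen_model ar A g' E' VP' VD'"
    unfolding gen_model_def
    by (intro conjI allI impI ballI)
      (use W_nonempty bij_betw_imp_surj_on[OF bij] in
        \<open>auto simp: depS' VP'_def VD' E'_def g' f_in Pred_Nx
          intro: Dep_refl Dep_Var_Nx Dep_trans E_Dep[THEN conjunct1] E_Dep[THEN conjunct2]
            E_Pred E_Nx Dep_Nx\<close>)
  show "sat A g' E' VP' VD' a \<phi> \<longleftrightarrow> S (f a) \<phi>" if "a \<in> A"
    using that
  proof (induction \<phi> arbitrary: a)
    case (DMod X \<psi>)
    then show ?case
      by (simp add: ball_W E'_def f_in)
  qed (simp_all add: VP'_def VD'_def g')
qed

end

fun nx_depth :: "'v trm \<Rightarrow> nat" where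
  "nx_depth (Var v) = 0"
| "nx_depth (Nx t) = Suc (nx_depth t)"

fun trunc :: "nat \<Rightarrow> 'v trm \<Rightarrow> 'v trm" where
  "trunc k (Var v) = Var v"
| "trunc 0 (Nx t) = trunc 0 t"
| "trunc (Suc k) (Nx t) = Nx (trunc k t)"

definition terms_upto :: "nat \<Rightarrow> 'v trm set" where
  "terms_upto k = {t. nx_depth t \<le> k}"

lemma trunc_id: "nx_depth t \<le> k \<Longrightarrow> trunc k t = t"
  by (induction k t rule: trunc.induct) auto

lemma trunc_in_terms_upto: "trunc k t \<in> terms_upto k"
  unfolding terms_upto_def by (induction k t rule: trunc.induct) auto

lemma trunc_image_subset: "trunc k ` X \<subseteq> terms_upto k"
  using trunc_in_terms_upto by blast

lemma trunc_0_Var: "trunc 0 t \<in> range Var"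
  by (induction t) auto

lemma trunc_0_Nx [simp]: "trunc 0 \<circ> Nx = trunc 0"
  by auto

lemma trunc_Suc_Nx [simp]: "trunc (Suc k) \<circ> Nx = Nx \<circ> trunc k"
  by auto

lemma trunc_range_Var [simp]: "trunc k ` range Var = range Var"
  by (auto simp: image_iff)

lemma terms_upto_0: "terms_upto 0 = range Var"
  unfolding terms_upto_def by (auto elim: nx_depth.elims)

lemma terms_upto_Suc: "terms_upto (Suc k) = range Var \<union> Nx ` terms_upto k"
proof -
  have "t \<in> range Var \<union> Nx ` {t. nx_depth t \<le> k}" if "nx_depth t \<le> Suc k" for t :: "'v trm"
    using that by (cases t) auto
  then show ?thesis
    unfolding terms_upto_def by auto
qed

lemma finite_terms_upto: "finite (terms_upto k :: 'v::finite trm set)"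
  by (induction k) (simp_all add: terms_upto_0 terms_upto_Suc)

lemma Nx_image_terms_upto: "Y \<subseteq> terms_upto k \<Longrightarrow> Nx ` Y \<subseteq> terms_upto (Suc k)"
  by (auto simp: terms_upto_Suc)

lemma fne_trunc_image: "fne X \<Longrightarrow> fne (trunc k ` X)"
  by (simp add: fne_def)

lemma fne_Nx_image: "fne X \<Longrightarrow> fne (Nx ` X)"
  by (simp add: fne_def)

lemma fne_terms_upto: "Y \<noteq> {} \<Longrightarrow> Y \<subseteq> (terms_upto k :: 'v::finite trm set) \<Longrightarrow> fne Y"
  using finite_subset[OF _ finite_terms_upto] by (auto simp: fne_def)

fun within_depth :: "nat \<Rightarrow> ('v, 'p) fm \<Rightarrow> bool" where
  "within_depth k (Pred P xs) = (\<forall>t\<in>set xs. nx_depth t \<le> k)"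
| "within_depth k (Neg \<phi>) = within_depth k \<phi>"
| "within_depth k (Conj \<phi> \<psi>) = (within_depth k \<phi> \<and> within_depth k \<psi>)"
| "within_depth k (Next \<phi>) = (k > 0 \<and> within_depth (k - 1) \<phi>)"
| "within_depth k (DMod X \<phi>) = ((\<forall>t\<in>X. nx_depth t \<le> k) \<and> within_depth k \<phi>)"
| "within_depth k (Dep X y) = ((\<forall>t\<in>X. nx_depth t \<le> k) \<and> nx_depth y \<le> k)"

lemma within_depth_mono: "within_depth k \<phi> \<Longrightarrow> k \<le> k' \<Longrightarrow> within_depth k' \<phi>"
proof (induction \<phi> arbitrary: k k')
  case (Next \<phi>)
  then show ?case by fastforce
qed force+

lemma finite_bounded_depth: "finite X \<Longrightarrow> \<exists>k. \<forall>t\<in>X. nx_depth t \<le> k"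
  using finite_nat_set_iff_bounded_le[of "nx_depth ` X"] by auto

lemma ex_within_depth: "wf_fm ar \<phi> \<Longrightarrow> \<exists>k. within_depth k \<phi>"
proof (induction \<phi>)
  case (Pred P xs)
  then show ?case using finite_bounded_depth[of "set xs"] by auto
next
  case (Conj \<phi> \<psi>)
  then obtain a b where "within_depth a \<phi>" "within_depth b \<psi>" by auto
  then have "within_depth (max a b) (Conj \<phi> \<psi>)" by (auto intro: within_depth_mono)
  then show ?case ..
next
  case (Next \<phi>)
  then obtain a where "within_depth a \<phi>" by auto
  then have "within_depth (Suc a) (Next \<phi>)" by simp
  then show ?case ..
next
  case (DMod X \<phi>)
  then obtain a b where "within_depth a \<phi>" "\<forall>t\<in>X. nx_depth t \<le> b"
    using finite_bounded_depth by (fastforce simp: fne_def)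
  then have "within_depth (max a b) (DMod X \<phi>)" by (auto intro: within_depth_mono)
  then show ?case ..
next
  case (Dep X y)
  then obtain b where "\<forall>t\<in>X. nx_depth t \<le> b"
    using finite_bounded_depth by (auto simp: fne_def)
  then have "within_depth (max b (nx_depth y)) (Dep X y)" by auto
  then show ?case ..
qed simp

fun subformulas :: "('v, 'p) fm \<Rightarrow> ('v, 'p) fm set" where
  "subformulas (Pred P xs) = {Pred P xs}"
| "subformulas (Neg \<phi>) = insert (Neg \<phi>) (subformulas \<phi>)"
| "subformulas (Conj \<phi> \<psi>) = insert (Conj \<phi> \<psi>) (subformulas \<phi> \<union> subformulas \<psi>)"
| "subformulas (Next \<phi>) = insert (Next \<phi>) (subformulas \<phi>)"
| "subformulas (DMod X \<phi>) = insert (DMod X \<phi>) (subformulas \<phi>)"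
| "subformulas (Dep X y) = {Dep X y}"

lemma finite_subformulas: "finite (subformulas \<phi>)"
  by (induction \<phi>) auto

locale filtration = dfd_model ar W g E VP VD
  for ar :: "'p::finite \<Rightarrow> nat" and W :: "'w set" and g :: "'w \<Rightarrow> 'w"
    and E :: "'v::finite trm set \<Rightarrow> ('w \<times> 'w) set"
    and VP :: "'p \<Rightarrow> 'v trm list \<Rightarrow> 'w set" and VD :: "'v trm set \<Rightarrow> 'v trm \<Rightarrow> 'w set" +
  fixes \<Gamma> :: "('v, 'p) fm set" and N :: nat
  assumes finite_\<Gamma>: "finite \<Gamma>"
begin

definition atoms :: "nat \<Rightarrow> ('v, 'p) fm set" where
  "atoms k = (\<Union>P. Pred P ` {xs. set xs \<subseteq> terms_upto k \<and> length xs = ar P})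
     \<union> (\<lambda>(Z, y). Dep Z y) ` (Pow (terms_upto k) \<times> terms_upto k)"

fun Cl :: "nat \<Rightarrow> ('v, 'p) fm set" where
  "Cl 0 = atoms 0 \<union> \<Gamma>"
| "Cl (Suc k) = atoms (Suc k) \<union> \<Gamma> \<union> Next ` Cl k"

lemma finite_atoms: "finite (atoms k)"
  unfolding atoms_def using finite_terms_upto
  by (intro finite_UnI finite_UN_I finite_imageI finite_lists_length_eq finite_SigmaI) auto

lemma finite_Cl: "finite (Cl k)"
  by (induction k) (simp_all add: finite_atoms finite_\<Gamma>)

lemma atoms_subset_Cl: "atoms k \<subseteq> Cl k"
  by (cases k) auto

lemma Pred_in_Cl: "set xs \<subseteq> terms_upto k \<Longrightarrow> length xs = ar P \<Longrightarrow> Pred P xs \<in> Cl k"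
  using atoms_subset_Cl unfolding atoms_def by blast

lemma Dep_in_Cl: "Z \<subseteq> terms_upto k \<Longrightarrow> y \<in> terms_upto k \<Longrightarrow> Dep Z y \<in> Cl k"
  using atoms_subset_Cl unfolding atoms_def by blast

lemma \<Gamma>_subset_Cl: "\<Gamma> \<subseteq> Cl k"
  by (cases k) auto

definition tp :: "nat \<Rightarrow> 'w \<Rightarrow> ('v, 'p) fm set" where
  "tp k w = {\<chi> \<in> Cl k. S w \<chi>}"

lemma tp_iff: "\<chi> \<in> Cl k \<Longrightarrow> \<chi> \<in> tp k w \<longleftrightarrow> S w \<chi>"
  by (simp add: tp_def)

lemma Next_in_tp_iff: "\<chi> \<in> Cl k \<Longrightarrow> Next \<chi> \<in> tp (Suc k) w \<longleftrightarrow> \<chi> \<in> tp k (g w)"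
  by (simp add: tp_def)

definition invariant :: "'v trm set \<Rightarrow> ('v, 'p) fm set" where
  "invariant Y = {\<chi>. \<forall>u\<in>W. \<forall>u'\<in>W. (u, u') \<in> E Y \<longrightarrow> S u \<chi> = S u' \<chi>}"

lemma invariantI:
  assumes "fne Y" and "\<And>u u'. u \<in> W \<Longrightarrow> u' \<in> W \<Longrightarrow> (u, u') \<in> E Y \<Longrightarrow> S u \<chi> \<Longrightarrow> S u' \<chi>"
  shows "\<chi> \<in> invariant Y"
  using assms E_sym unfolding invariant_def by blast

lemma E_antimono:
  "fne Y \<Longrightarrow> fne Y' \<Longrightarrow> Y \<subseteq> Y' \<Longrightarrow> u \<in> W \<Longrightarrow> u' \<in> W \<Longrightarrow> (u, u') \<in> E Y' \<Longrightarrow> (u, u') \<in> E Y"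
  using E_Dep[of Y' Y u u'] Dep_refl[of Y' u] unfolding depS_def by blast

lemma invariant_mono: "fne Y \<Longrightarrow> fne Y' \<Longrightarrow> Y \<subseteq> Y' \<Longrightarrow> invariant Y \<subseteq> invariant Y'"
  using E_antimono unfolding invariant_def by blast

lemma tp_inter_invariant_eq:
  "u \<in> W \<Longrightarrow> u' \<in> W \<Longrightarrow> (u, u') \<in> E Y \<Longrightarrow> tp k u \<inter> invariant Y = tp k u' \<inter> invariant Y"
  unfolding tp_def invariant_def by blast

lemma Dep_invariant:
  assumes Z: "fne Z"
  shows "Dep Z y \<in> invariant Z"
proof (rule invariantI[OF Z])
  fix u u' assume "u \<in> W" "u' \<in> W" "(u, u') \<in> E Z" "S u (Dep Z y)"
  then have "depS VD u' Z {y}"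
    using E_Dep[OF Z, of "{y}"] by (simp add: depS_def fne_def)
  then show "S u' (Dep Z y)"
    by (simp add: depS_def)
qed

lemma Pred_invariant: "fne Z \<Longrightarrow> set xs \<subseteq> Z \<Longrightarrow> length xs = ar P \<Longrightarrow> Pred P xs \<in> invariant Z"
  by (rule invariantI) (auto intro: E_Pred)

lemma Next_invariant:
  assumes Z: "fne Z" and \<chi>: "\<chi> \<in> invariant Z"
  shows "Next \<chi> \<in> invariant (Nx ` Z)"
proof (rule invariantI)
  show "fne (Nx ` Z)"
    using fne_Nx_image[OF Z] .
  fix u u' assume u: "u \<in> W" "u' \<in> W" and "(u, u') \<in> E (Nx ` Z)" and "S u (Next \<chi>)"
  then have "(g u, g u') \<in> E Z" and "S (g u) \<chi>"
    using E_Nx[OF Z] by auto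
  then show "S u' (Next \<chi>)"
    using \<chi> g_closed[OF u(1)] g_closed[OF u(2)] unfolding invariant_def by auto
qed

lemma DMod_invariant: "fne Z \<Longrightarrow> DMod Z \<psi> \<in> invariant Z"
  by (rule invariantI) (auto dest: E_sym E_trans)

definition deps :: "nat \<Rightarrow> 'v trm set \<Rightarrow> ('v, 'p) fm set \<Rightarrow> 'v trm set" where
  "deps k X L = {y \<in> terms_upto k. Dep (trunc k ` X) y \<in> L}"

lemma subset_deps_tp_iff:
  "Y \<subseteq> terms_upto k \<Longrightarrow> Y \<subseteq> deps k X (tp k w) \<longleftrightarrow> depS VD w (trunc k ` X) Y"
  unfolding deps_def depS_def using tp_iff[OF Dep_in_Cl[OF trunc_image_subset]] by auto

lemma trunc_subset_deps: "fne X \<Longrightarrow> w \<in> W \<Longrightarrow> trunc k ` X \<subseteq> deps k X (tp k w)"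
  using subset_deps_tp_iff[OF trunc_image_subset] Dep_refl[OF fne_trunc_image]
  unfolding depS_def by blast

lemma fne_deps: "fne X \<Longrightarrow> w \<in> W \<Longrightarrow> fne (deps k X (tp k w))"
  using trunc_subset_deps[of X w k] fne_terms_upto[of "deps k X (tp k w)" k]
  unfolding deps_def by (auto simp: fne_def)

lemma deps_tp_eq:
  assumes X: "fne X" and w: "w \<in> W" and Z: "fne Z" "trunc k ` X \<subseteq> Z"
  shows "deps k X (tp k w) = {y \<in> terms_upto k. Dep (trunc k ` X) y \<in> tp k w \<inter> invariant Z}"
  using invariant_mono[OF fne_trunc_image[OF X] Z] Dep_invariant[OF fne_trunc_image[OF X]]
  unfolding deps_def by blast

fun key :: "'v trm set \<Rightarrow> nat \<times> ('v, 'p) fm set \<Rightarrow> nat \<times> ('v, 'p) fm set" where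
  "key X (k, L) = (k, L \<inter> invariant (deps k X L))"

lemma key_eq_imp_deps_eq:
  assumes X: "fne X" and w: "w \<in> W" "w' \<in> W"
    and key: "key X (k, tp k w) = key X (k, tp k w')"
  shows "deps k X (tp k w) = deps k X (tp k w')"
proof -
  let ?D = "deps k X (tp k w)" and ?D' = "deps k X (tp k w')"
  have eq: "tp k w \<inter> invariant ?D = tp k w' \<inter> invariant ?D'"
    using key by simp
  have "?D = {y \<in> terms_upto k. Dep (trunc k ` X) y \<in> tp k w \<inter> invariant ?D}"
    by (rule deps_tp_eq[OF X w(1) fne_deps[OF X w(1)] trunc_subset_deps[OF X w(1)]])
  also have "\<dots> = {y \<in> terms_upto k. Dep (trunc k ` X) y \<in> tp k w' \<inter> invariant ?D'}"
    by (simp only: eq)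
  also have "\<dots> = ?D'"
    by (rule deps_tp_eq[OF X w(2) fne_deps[OF X w(2)] trunc_subset_deps[OF X w(2)], symmetric])
  finally show ?thesis .
qed

lemma key_eq_iff:
  assumes X: "fne X" and w: "w \<in> W" "w' \<in> W"
  shows "key X (k, tp k w) = key X (k, tp k w') \<longleftrightarrow>
    tp k w \<inter> invariant (deps k X (tp k w)) = tp k w' \<inter> invariant (deps k X (tp k w))"
proof
  assume key: "key X (k, tp k w) = key X (k, tp k w')"
  then have "tp k w \<inter> invariant (deps k X (tp k w)) = tp k w' \<inter> invariant (deps k X (tp k w'))"
    by simp
  then show "tp k w \<inter> invariant (deps k X (tp k w)) = tp k w' \<inter> invariant (deps k X (tp k w))"
    by (simp only: key_eq_imp_deps_eq[OF X w key])
next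
  let ?D = "deps k X (tp k w)"
  assume eq: "tp k w \<inter> invariant ?D = tp k w' \<inter> invariant ?D"
  have "?D = {y \<in> terms_upto k. Dep (trunc k ` X) y \<in> tp k w \<inter> invariant ?D}"
    by (rule deps_tp_eq[OF X w(1) fne_deps[OF X w(1)] trunc_subset_deps[OF X w(1)]])
  also have "\<dots> = {y \<in> terms_upto k. Dep (trunc k ` X) y \<in> tp k w' \<inter> invariant ?D}"
    by (simp only: eq)
  also have "\<dots> = deps k X (tp k w')"
    by (rule deps_tp_eq[OF X w(2) fne_deps[OF X w(1)] trunc_subset_deps[OF X w(1)], symmetric])
  finally show "key X (k, tp k w) = key X (k, tp k w')"
    using eq by simp
qed

lemma key_eq_sat_iff:
  assumes X: "fne X" and w: "w \<in> W" "w' \<in> W"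
    and key: "key X (k, tp k w) = key X (k, tp k w')"
    and \<chi>: "\<chi> \<in> Cl k" "\<chi> \<in> invariant (trunc k ` X)"
  shows "S w \<chi> \<longleftrightarrow> S w' \<chi>"
proof -
  have "\<chi> \<in> invariant (deps k X (tp k w))"
    using invariant_mono[OF fne_trunc_image[OF X] fne_deps[OF X w(1)] trunc_subset_deps[OF X w(1)]] \<chi>(2)
    by blast
  then show ?thesis
    using key[unfolded key_eq_iff[OF X w]] tp_iff[OF \<chi>(1)] by blast
qed

lemma E_imp_key_eq:
  assumes X: "fne X" and w: "w \<in> W" "w' \<in> W" and E: "(w, w') \<in> E (trunc k ` X)"
  shows "key X (k, tp k w) = key X (k, tp k w')"
proof -
  let ?D = "deps k X (tp k w)"
  have "depS VD w (trunc k ` X) ?D"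
    using subset_deps_tp_iff[of ?D k X w] by (simp add: deps_def)
  then have "(w, w') \<in> E ?D"
    using E_Dep[OF fne_trunc_image[OF X] fne_deps[OF X w(1)] w E] by blast
  then show ?thesis
    using key_eq_iff[OF X w] tp_inter_invariant_eq[OF w] by blast
qed

definition WF :: "(nat \<times> ('v, 'p) fm set) set" where
  "WF = {(k, tp k w) | k w. k \<le> N \<and> w \<in> W}"

fun gF :: "nat \<times> ('v, 'p) fm set \<Rightarrow> nat \<times> ('v, 'p) fm set" where
  "gF (0, L) = (0, L)"
| "gF (Suc k, L) = (k, {\<chi> \<in> Cl k. Next \<chi> \<in> L})"

definition EF :: "'v trm set \<Rightarrow> ((nat \<times> ('v, 'p) fm set) \<times> (nat \<times> ('v, 'p) fm set)) set" where
  "EF X = {(p, q) \<in> WF \<times> WF. key X p = key X q}"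

definition VPF :: "'p \<Rightarrow> 'v trm list \<Rightarrow> (nat \<times> ('v, 'p) fm set) set" where
  "VPF P xs = {q \<in> WF. Pred P (map (trunc (fst q)) xs) \<in> snd q}"

definition VDF :: "'v trm set \<Rightarrow> 'v trm \<Rightarrow> (nat \<times> ('v, 'p) fm set) set" where
  "VDF X y = {q \<in> WF. Dep (trunc (fst q) ` X) (trunc (fst q) y) \<in> snd q}"

lemma VPF_subset: "VPF P xs \<subseteq> WF"
  unfolding VPF_def by blast

lemma VDF_subset: "VDF X y \<subseteq> WF"
  unfolding VDF_def by blast

lemma finite_WF: "finite WF"
proof (rule finite_subset)
  show "WF \<subseteq> (\<Union>k\<le>N. {k} \<times> Pow (Cl k))"
    unfolding WF_def tp_def by blast
qed (simp add: finite_Cl)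

lemma tp_in_WF: "k \<le> N \<Longrightarrow> w \<in> W \<Longrightarrow> (k, tp k w) \<in> WF"
  unfolding WF_def by blast

lemma WFE:
  assumes "q \<in> WF"
  obtains k w where "q = (k, tp k w)" "k \<le> N" "w \<in> W"
  using assms unfolding WF_def by blast

lemma EFE:
  assumes "(p, q) \<in> EF X"
  obtains k w w' where "p = (k, tp k w)" "q = (k, tp k w')" "k \<le> N" "w \<in> W" "w' \<in> W"
    "key X (k, tp k w) = key X (k, tp k w')"
proof -
  from assms have "p \<in> WF" "q \<in> WF" and key: "key X p = key X q"
    unfolding EF_def by auto
  then obtain k w k' w' where p: "p = (k, tp k w)" "k \<le> N" "w \<in> W"
    and q: "q = (k', tp k' w')" "k' \<le> N" "w' \<in> W"
    by (auto elim!: WFE)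
  moreover have "k' = k"
    using key by (simp add: p q)
  ultimately show thesis
    using that key by blast
qed

lemma gF_tp: "gF (Suc k, tp (Suc k) w) = (k, tp k (g w))"
proof -
  have "{\<chi> \<in> Cl k. Next \<chi> \<in> tp (Suc k) w} = tp k (g w)"
    using Next_in_tp_iff[of _ k w] tp_def by blast
  then show ?thesis
    by simp
qed

lemma VPF_tp:
  "k \<le> N \<Longrightarrow> w \<in> W \<Longrightarrow> length xs = ar P \<Longrightarrow> (k, tp k w) \<in> VPF P xs \<longleftrightarrow> w \<in> VP P (map (trunc k) xs)"
  using tp_iff[OF Pred_in_Cl, of "map (trunc k) xs" k P w] trunc_in_terms_upto tp_in_WF
  unfolding VPF_def by auto

lemma VDF_tp: "k \<le> N \<Longrightarrow> w \<in> W \<Longrightarrow> (k, tp k w) \<in> VDF X y \<longleftrightarrow> w \<in> VD (trunc k ` X) (trunc k y)"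
  using tp_iff[OF Dep_in_Cl[OF trunc_image_subset trunc_in_terms_upto]] tp_in_WF
  unfolding VDF_def by auto

lemma depS_VDF_tp:
  "k \<le> N \<Longrightarrow> w \<in> W \<Longrightarrow> depS VDF (k, tp k w) X Y \<longleftrightarrow> depS VD w (trunc k ` X) (trunc k ` Y)"
  unfolding depS_def by (simp add: VDF_tp)

lemma gF_closed: "q \<in> WF \<Longrightarrow> gF q \<in> WF"
proof (elim WFE)
  fix k w assume q: "q = (k, tp k w)" "k \<le> N" "w \<in> W"
  show "gF q \<in> WF"
  proof (cases k)
    case 0
    then show ?thesis using q tp_in_WF by simp
  next
    case (Suc j)
    then show ?thesis using q gF_tp tp_in_WF g_closed by simp
  qed
qed

lemma VDF_refl: "fne X \<Longrightarrow> q \<in> WF \<Longrightarrow> x \<in> X \<Longrightarrow> q \<in> VDF X x"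
  by (elim WFE) (simp add: VDF_tp, meson Dep_refl fne_trunc_image imageI)

lemma VDF_trans:
  "fne X \<Longrightarrow> fne Y \<Longrightarrow> fne Z \<Longrightarrow> q \<in> WF \<Longrightarrow> depS VDF q X Y \<Longrightarrow> depS VDF q Y Z \<Longrightarrow> depS VDF q X Z"
  by (elim WFE) (simp add: depS_VDF_tp, meson Dep_trans fne_trunc_image)

lemma VDF_Var_Nx: "q \<in> WF \<Longrightarrow> q \<in> VDF (range Var) (Nx x)"
proof (elim WFE)
  fix k w assume q: "q = (k, tp k w)" "k \<le> N" "w \<in> W"
  show "q \<in> VDF (range Var) (Nx x)"
  proof (cases k)
    case 0
    have "fne (range Var :: 'v trm set)"
      by (simp add: fne_def)
    then show ?thesis
      using q 0 Dep_refl[OF _ q(3) trunc_0_Var] by (simp add: VDF_tp)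
  next
    case (Suc j)
    then show ?thesis
      using q Dep_Var_Nx by (simp add: VDF_tp)
  qed
qed

lemma EF_Dep:
  assumes X: "fne X" and Y: "fne Y" and pq: "(p, q) \<in> EF X" and dep: "depS VDF p X Y"
  shows "depS VDF q X Y \<and> (p, q) \<in> EF Y"
  using pq
proof (elim EFE)
  fix k w w' assume p: "p = (k, tp k w)" and q: "q = (k, tp k w')" and k: "k \<le> N"
    and w: "w \<in> W" "w' \<in> W" and key: "key X (k, tp k w) = key X (k, tp k w')"
  let ?DX = "\<lambda>w. deps k X (tp k w)" and ?DY = "deps k Y (tp k w)"
  have XY: "trunc k ` Y \<subseteq> ?DX w"
    using dep subset_deps_tp_iff[OF trunc_image_subset] by (simp add: p depS_VDF_tp k w)
  moreover have "?DX w = ?DX w'"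
    using key_eq_imp_deps_eq[OF X w key] .
  ultimately have "depS VDF q X Y"
    using subset_deps_tp_iff[OF trunc_image_subset] by (simp add: q depS_VDF_tp k w)
  have "depS VD w (trunc k ` Y) ?DY"
    using subset_deps_tp_iff[of ?DY k Y w] by (simp add: deps_def)
  then have "depS VD w (trunc k ` X) ?DY"
    using XY subset_deps_tp_iff[OF trunc_image_subset]
    by (intro Dep_trans[OF fne_trunc_image[OF X] fne_trunc_image[OF Y] fne_deps[OF Y w(1)] w(1)]) auto
  then have "?DY \<subseteq> ?DX w"
    using subset_deps_tp_iff[of ?DY k X w] by (simp add: deps_def)
  then have "invariant ?DY \<subseteq> invariant (?DX w)"
    by (rule invariant_mono[OF fne_deps[OF Y w(1)] fne_deps[OF X w(1)]])
  moreover have "tp k w \<inter> invariant (?DX w) = tp k w' \<inter> invariant (?DX w)"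
    using key key_eq_iff[OF X w] by blast
  ultimately have "tp k w \<inter> invariant ?DY = tp k w' \<inter> invariant ?DY"
    by blast
  then have "key Y (k, tp k w) = key Y (k, tp k w')"
    using key_eq_iff[OF Y w] by blast
  then show ?thesis
    using \<open>depS VDF q X Y\<close> pq unfolding EF_def by (simp add: p q)
qed

lemma EF_Pred:
  assumes X: "fne X" and pq: "(p, q) \<in> EF X" and len: "length xs = ar P"
    and p_in: "p \<in> VPF P xs" and xs: "set xs \<subseteq> X"
  shows "q \<in> VPF P xs"
  using pq
proof (elim EFE)
  fix k w w' assume p: "p = (k, tp k w)" and q: "q = (k, tp k w')" and k: "k \<le> N"
    and w: "w \<in> W" "w' \<in> W" and key: "key X (k, tp k w) = key X (k, tp k w')"
  let ?\<chi> = "Pred P (map (trunc k) xs)"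
  have "?\<chi> \<in> Cl k"
    using len trunc_in_terms_upto by (intro Pred_in_Cl) auto
  moreover have "?\<chi> \<in> invariant (trunc k ` X)"
    using xs len by (intro Pred_invariant[OF fne_trunc_image[OF X]]) auto
  ultimately have "S w ?\<chi> \<longleftrightarrow> S w' ?\<chi>"
    by (rule key_eq_sat_iff[OF X w key])
  then show "q \<in> VPF P xs"
    using p_in by (simp add: p q VPF_tp k w len)
qed

lemma VPF_Nx: "q \<in> WF \<Longrightarrow> length xs = ar P \<Longrightarrow> q \<in> VPF P (map Nx xs) \<longleftrightarrow> gF q \<in> VPF P xs"
proof (elim WFE)
  fix k w assume q: "q = (k, tp k w)" "k \<le> N" "w \<in> W" and len: "length xs = ar P"
  show "q \<in> VPF P (map Nx xs) \<longleftrightarrow> gF q \<in> VPF P xs"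
  proof (cases k)
    case 0
    then show ?thesis
      using q len by (simp add: VPF_tp)
  next
    case (Suc j)
    then have "gF q = (j, tp j (g w))"
      by (simp only: q gF_tp)
    then show ?thesis
      using q Suc len Pred_Nx[OF q(3), of "map (trunc j) xs"] g_closed[OF q(3)]
      by (simp add: VPF_tp)
  qed
qed

lemma deps_0_Nx: "deps 0 (Nx ` X) L = deps 0 X L"
  by (simp add: deps_def image_comp)

lemma EF_Nx:
  assumes X: "fne X" and pq: "(p, q) \<in> EF (Nx ` X)"
  shows "(gF p, gF q) \<in> EF X"
  using pq
proof (elim EFE)
  fix k w w' assume p: "p = (k, tp k w)" and q: "q = (k, tp k w')" and k: "k \<le> N"
    and w: "w \<in> W" "w' \<in> W" and key: "key (Nx ` X) (k, tp k w) = key (Nx ` X) (k, tp k w')"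
  show "(gF p, gF q) \<in> EF X"
  proof (cases k)
    case 0
    then show ?thesis
      using key pq by (simp add: p q EF_def deps_0_Nx)
  next
    case (Suc j)
    let ?D = "deps j X (tp j (g w))" and ?D' = "deps (Suc j) (Nx ` X) (tp (Suc j) w)"
    have gw: "g w \<in> W" "g w' \<in> W"
      using g_closed w by auto
    have "depS VD (g w) (trunc j ` X) ?D"
      using subset_deps_tp_iff[of ?D j X "g w"] by (simp add: deps_def)
    then have "depS VD w (Nx ` trunc j ` X) (Nx ` ?D)"
      by (rule Dep_Nx[OF fne_trunc_image[OF X] fne_deps[OF X gw(1)] w(1)])
    then have "Nx ` ?D \<subseteq> ?D'"
      using subset_deps_tp_iff[OF Nx_image_terms_upto, of ?D j "Nx ` X" w]
      by (simp add: deps_def image_comp)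
    then have inv: "invariant (Nx ` ?D) \<subseteq> invariant ?D'"
      by (rule invariant_mono[OF fne_Nx_image[OF fne_deps[OF X gw(1)]] fne_deps[OF fne_Nx_image[OF X] w(1)]])
    have tp_eq: "tp (Suc j) w \<inter> invariant ?D' = tp (Suc j) w' \<inter> invariant ?D'"
      using key key_eq_iff[OF fne_Nx_image[OF X] w] Suc by simp
    have "\<chi> \<in> tp j (g w) \<longleftrightarrow> \<chi> \<in> tp j (g w')" if "\<chi> \<in> Cl j" "\<chi> \<in> invariant ?D" for \<chi>
    proof -
      have "Next \<chi> \<in> invariant ?D'"
        using inv Next_invariant[OF fne_deps[OF X gw(1)] that(2)] by blast
      then show ?thesis
        using tp_eq Next_in_tp_iff[OF that(1)] by blast
    qed
    then have "tp j (g w) \<inter> invariant ?D = tp j (g w') \<inter> invariant ?D"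
      unfolding tp_def by blast
    then have "key X (j, tp j (g w)) = key X (j, tp j (g w'))"
      using key_eq_iff[OF X gw] by blast
    moreover have "gF p = (j, tp j (g w))" "gF q = (j, tp j (g w'))"
      by (simp_all only: p q Suc gF_tp)
    ultimately show ?thesis
      using Suc k gw by (simp add: EF_def tp_in_WF)
  qed
qed

lemma VDF_Nx:
  assumes X: "fne X" and Y: "fne Y" and q_in: "q \<in> WF" and dep: "depS VDF (gF q) X Y"
  shows "depS VDF q (Nx ` X) (Nx ` Y)"
  using q_in
proof (elim WFE)
  fix k w assume q: "q = (k, tp k w)" "k \<le> N" "w \<in> W"
  show "depS VDF q (Nx ` X) (Nx ` Y)"
  proof (cases k)
    case 0
    then show ?thesis
      using q dep by (simp add: depS_VDF_tp image_comp)
  next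
    case (Suc j)
    then have "gF q = (j, tp j (g w))"
      by (simp only: q gF_tp)
    then have "depS VD (g w) (trunc j ` X) (trunc j ` Y)"
      using q Suc dep g_closed by (simp add: depS_VDF_tp)
    then have "depS VD w (Nx ` trunc j ` X) (Nx ` trunc j ` Y)"
      by (rule Dep_Nx[OF fne_trunc_image[OF X] fne_trunc_image[OF Y] q(3)])
    then show ?thesis
      using q Suc by (simp add: depS_VDF_tp image_comp)
  qed
qed

lemma gen_model_filtration: "gen_model ar WF gF EF VPF VDF"
  unfolding gen_model_def
proof (intro conjI allI impI ballI)
  show "WF \<noteq> {}"
    using W_nonempty tp_in_WF[of 0] by blast
  show "equiv WF (EF X)" for X
    unfolding EF_def by (rule equiv_kernel_on)
qed (auto simp: VPF_subset VDF_subset VPF_Nx intro: gF_closed VDF_refl VDF_trans VDF_Var_Nx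
      EF_Dep[THEN conjunct1] EF_Dep[THEN conjunct2] EF_Pred VPF_Nx EF_Nx VDF_Nx)

lemma sat_filtration:
  assumes "wf_fm ar \<psi>" "subformulas \<psi> \<subseteq> \<Gamma>" "within_depth k \<psi>" "k \<le> N" "w \<in> W"
  shows "sat WF gF EF VPF VDF (k, tp k w) \<psi> \<longleftrightarrow> S w \<psi>"
  using assms
proof (induction \<psi> arbitrary: k w)
  case (Pred P xs)
  then have "map (trunc k) xs = xs"
    by (simp add: map_idI trunc_id)
  then show ?case
    using Pred by (simp add: VPF_tp)
next
  case (Next \<psi>)
  then obtain j where j: "k = Suc j"
    by (cases k) auto
  then have "gF (k, tp k w) = (j, tp j (g w))"
    by (simp only: gF_tp)
  then show ?case
    using Next j g_closed by simp
next
  case (DMod X \<psi>)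
  then have X: "fne X" and trunc_X: "trunc k ` X = X"
    by (auto simp: trunc_id)
  have IH: "sat WF gF EF VPF VDF (k, tp k w') \<psi> \<longleftrightarrow> S w' \<psi>" if "w' \<in> W" for w'
    using DMod that by simp
  have related: "((k, tp k w), (k, tp k w')) \<in> EF X \<longleftrightarrow> key X (k, tp k w) = key X (k, tp k w')"
    if "w' \<in> W" for w'
    using tp_in_WF DMod.prems that by (simp add: EF_def)
  show ?case
  proof
    assume sat_F: "sat WF gF EF VPF VDF (k, tp k w) (DMod X \<psi>)"
    have "S w' \<psi>" if "w' \<in> W" "(w, w') \<in> E X" for w'
    proof -
      have "key X (k, tp k w) = key X (k, tp k w')"
        using E_imp_key_eq[OF X DMod.prems(5) that(1)] that(2) trunc_X by simp
      then show ?thesis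
        using sat_F related[OF that(1)] tp_in_WF[OF DMod.prems(4) that(1)] IH[OF that(1)] by simp
    qed
    then show "S w (DMod X \<psi>)"
      by simp
  next
    assume "S w (DMod X \<psi>)"
    have "S w' \<psi>" if "w' \<in> W" "key X (k, tp k w) = key X (k, tp k w')" for w'
    proof -
      have "DMod X \<psi> \<in> Cl k"
        using DMod.prems(2) \<Gamma>_subset_Cl by auto
      moreover have "DMod X \<psi> \<in> invariant (trunc k ` X)"
        using DMod_invariant[OF X] trunc_X by simp
      ultimately have "S w' (DMod X \<psi>)"
        using key_eq_sat_iff[OF X DMod.prems(5) that(1) that(2)] \<open>S w (DMod X \<psi>)\<close> by blast
      then show ?thesis
        using E_refl[OF X that(1)] that(1) by simp
    qed
    then have "sat WF gF EF VPF VDF q \<psi>" if "((k, tp k w), q) \<in> EF X" for q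
      using that IH by (elim EFE) auto
    then show "sat WF gF EF VPF VDF (k, tp k w) (DMod X \<psi>)"
      by simp
  qed
next
  case (Dep X y)
  then show ?case
    by (simp add: VDF_tp trunc_id image_cong)
qed simp_all

end

theorem theorem4p3:
  fixes \<phi> :: "('v::finite, 'p::finite) fm" and ar :: "'p \<Rightarrow> nat"
    and W :: "'w set"
  assumes "wf_fm ar \<phi>"
    and "gen_model ar W g E VP VD"
    and "s \<in> W"
    and "sat W g E VP VD s \<phi>"
  shows "\<exists>(W' :: nat set) g' E' VP' VD' s'. finite W' \<and> gen_model ar W' g' E' VP' VD'
           \<and> s' \<in> W' \<and> sat W' g' E' VP' VD' s' \<phi>"
proof -
  obtain N where N: "within_depth N \<phi>"
    using ex_within_depth[OF assms(1)] ..
  interpret filtration ar W g E VP VD "subformulas \<phi>" N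
    by unfold_locales (simp_all add: assms(2) finite_subformulas)
  interpret F: dfd_model ar WF gF EF VPF VDF
    by unfold_locales (rule gen_model_filtration)
  obtain h where h: "bij_betw h {0..<card WF} WF"
    using ex_bij_betw_nat_finite[OF finite_WF] ..
  have "(N, tp N s) \<in> WF" and "sat WF gF EF VPF VDF (N, tp N s) \<phi>"
    using tp_in_WF sat_filtration[OF assms(1) _ N] assms(3,4) by auto
  moreover obtain a where "a \<in> {0..<card WF}" "h a = (N, tp N s)"
    using h \<open>(N, tp N s) \<in> WF\<close> by (meson bij_betw_iff_bijections)
  ultimately show ?thesis
    using F.bij_pullback_model[OF h] by (intro exI conjI) auto
qed

end
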